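(* Let $\mathcal{X}$ and $\mathcal{Y}$ be mm-spaces. If $L^{\mathcal{U}}_h(\mathcal{X},\mathcal{Y})=0$, then $(h^r_{\mathcal{X}})_\#\mu_X=(h^r_{\mathcal{Y}})_\#\mu_Y$ (as Borel probability measures on $\mathbb{R}$) for Lebesgue-almost every $r>0$.
   Context: A metric measure space (mm-space) is a triple $(X,d_X,\mu_X)$ with $(X,d_X)$ compact metric and $\mu_X$ a Borel probability measure of full support. $h_{\mathcal{X}}(x,r)=\mu_X(\{x'\in X: d_X(x,x')\le r\})$ and, for fixed $r>0$, $h^r_{\mathcal{X}}:X\to\mathbb{R}$ is $h^r_{\mathcal{X}}(x)=h_{\mathcal{X}}(x,r)$. With $c_{\mathcal{X},\mathcal{Y}}(x,y)=\int_0^\infty|h_{\mathcal{X}}(x,t)-h_{\mathcal{Y}}(y,t)|\,dt$ and $\mathcal{U}(\mu_X,\mu_Y)$ the set of probability measures on $X\times Y$ with marginals $\mu_X,\mu_Y$, $L^{\mathcal{U}}_h(\mathcal{X},\mathcal{Y})=\inf_{\mu\in\mathcal{U}(\mu_X,\mu_Y)}\int_{X\times Y}c_{\mathcal{X},\mathcal{Y}}\,d\mu$. *)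

theory Defs
  imports "HOL-Analysis.Analysis" "HOL-Probability.Probability"
begin

definition borel_of :: "'a topology \<Rightarrow> 'a measure" where
  "borel_of T = sigma (topspace T) {U. openin T U}"

definition mm_space :: "'a set \<Rightarrow> ('a \<Rightarrow> 'a \<Rightarrow> real) \<Rightarrow> 'a measure \<Rightarrow> bool" where
  "mm_space X d mu \<longleftrightarrow>
     Metric_space X d \<and>
     compact_space (Metric_space.mtopology X d) \<and>
     prob_space mu \<and>
     space mu = X \<and>
     sets mu = sets (borel_of (Metric_space.mtopology X d)) \<and>
     (\<forall>U. openin (Metric_space.mtopology X d) U \<and> U \<noteq> {} \<longrightarrow> measure mu U > 0)"

definition hfun :: "'a set \<Rightarrow> ('a \<Rightarrow> 'a \<Rightarrow> real) \<Rightarrow> 'a measure \<Rightarrow> 'a \<Rightarrow> real \<Rightarrow> real" where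
  "hfun X d mu x r = measure mu {x' \<in> X. d x x' \<le> r}"

definition cost_h ::
  "'a set \<Rightarrow> ('a \<Rightarrow> 'a \<Rightarrow> real) \<Rightarrow> 'a measure \<Rightarrow>
   'b set \<Rightarrow> ('b \<Rightarrow> 'b \<Rightarrow> real) \<Rightarrow> 'b measure \<Rightarrow> 'a \<Rightarrow> 'b \<Rightarrow> ennreal" where
  "cost_h X dX muX Y dY muY x y =
     (\<integral>\<^sup>+ t. indicator {0..} t * ennreal \<bar>hfun X dX muX x t - hfun Y dY muY y t\<bar> \<partial>lborel)"

definition couplings :: "'a measure \<Rightarrow> 'b measure \<Rightarrow> ('a \<times> 'b) measure set" where
  "couplings muX muY = {p. prob_space p \<and> sets p = sets (muX \<Otimes>\<^sub>M muY) \<and>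
      distr p muX fst = muX \<and> distr p muY snd = muY}"

definition L_U_h ::
  "'a set \<Rightarrow> ('a \<Rightarrow> 'a \<Rightarrow> real) \<Rightarrow> 'a measure \<Rightarrow>
   'b set \<Rightarrow> ('b \<Rightarrow> 'b \<Rightarrow> real) \<Rightarrow> 'b measure \<Rightarrow> ennreal" where
  "L_U_h X dX muX Y dY muY =
     (INF p \<in> couplings muX muY. \<integral>\<^sup>+ z. cost_h X dX muX Y dY muY (fst z) (snd z) \<partial>p)"

end

theory Submission
  imports Defs
begin

text \<open>For a coupling \<open>p\<close> and an \<open>L\<close>-Lipschitz \<open>f\<close>,
  \<open>\<bar>\<integral> f \<circ> h\<^sup>t\<^sub>X d\<mu>\<^sub>X - \<integral> f \<circ> h\<^sup>t\<^sub>Y d\<mu>\<^sub>Y\<bar> \<le> L \<integral> \<bar>h\<^sub>X(x,t) - h\<^sub>Y(y,t)\<bar> dp(x,y)\<close>.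
  Integrating over \<open>t \<ge> 0\<close> (Tonelli), the left side has integral at most \<open>L\<close> times the cost of
  \<open>p\<close>, hence zero when \<open>L\<^sup>\<U>\<^sub>h = 0\<close>: for almost every \<open>t\<close>, the push-forwards of \<open>\<mu>\<^sub>X\<close> and \<open>\<mu>\<^sub>Y\<close>
  under \<open>h\<^sup>t\<close> give \<open>f\<close> the same integral. Countably many piecewise linear \<open>f\<close> approximating
  indicators of half-lines suffice to identify a distribution on \<open>\<real>\<close> by its distribution
  function.\<close>

lemma space_borel_of: "space (borel_of T) = topspace T"
  unfolding borel_of_def by (rule space_measure_of) (auto dest: openin_subset)

lemma sets_borel_of_openin: "openin T U \<Longrightarrow> U \<in> sets (borel_of T)"
  unfolding borel_of_def by (subst sets_measure_of) (auto dest: openin_subset)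

lemma sets_borel_of_closedin: "closedin T U \<Longrightarrow> U \<in> sets (borel_of T)"
  using sets.compl_sets[OF sets_borel_of_openin, of T "topspace T - U"]
  by (simp add: closedin_def space_borel_of double_diff)

locale metric_borel_prob = Metric_space X d + prob_space mu
  for X :: "'a set" and d and mu :: "'a measure" +
  assumes space_eq: "space mu = X"
    and sets_eq: "sets mu = sets (borel_of mtopology)"
begin

lemma openin_sets: "openin mtopology U \<Longrightarrow> U \<in> sets mu"
  by (simp add: sets_eq sets_borel_of_openin)

lemma mcball_sets: "x \<in> X \<Longrightarrow> {x' \<in> X. d x x' \<le> r} \<in> sets mu"
  using sets_borel_of_closedin[OF closedin_mcball, of x r] by (simp add: sets_eq mcball_def)

lemma hfun_nonneg: "0 \<le> hfun X d mu x r"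
  and hfun_le_1: "hfun X d mu x r \<le> 1"
  by (simp_all add: hfun_def)

lemma hfun_mono: "x \<in> X \<Longrightarrow> r \<le> s \<Longrightarrow> hfun X d mu x r \<le> hfun X d mu x s"
  unfolding hfun_def by (rule finite_measure_mono) (auto intro: mcball_sets)

lemma LIMSEQ_hfun_right:
  assumes "x \<in> X"
  shows "(\<lambda>n. hfun X d mu x (r + 1 / Suc n)) \<longlonglongrightarrow> hfun X d mu x r"
proof -
  define A where "A n = {x' \<in> X. d x x' \<le> r + 1 / Suc n}" for n
  have "range A \<subseteq> sets mu"
    using mcball_sets[OF assms] by (auto simp: A_def)
  moreover have "decseq A"
    by (rule decseq_SucI) (auto simp: A_def intro: order_trans[OF _ add_left_mono[OF frac_le]])
  ultimately have "(\<lambda>n. measure mu (A n)) \<longlonglongrightarrow> measure mu (\<Inter>n. A n)"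
    by (rule finite_Lim_measure_decseq)
  moreover have "(\<Inter>n. A n) = {x' \<in> X. d x x' \<le> r}"
  proof (intro equalityI subsetI)
    fix y assume y: "y \<in> (\<Inter>n. A n)"
    have "d x y \<le> r"
    proof (rule field_le_epsilon)
      fix e :: real assume "e > 0"
      then obtain n where "1 / Suc n < e"
        using nat_approx_posE by blast
      moreover have "d x y \<le> r + 1 / Suc n"
        using y by (auto simp: A_def)
      ultimately show "d x y \<le> r + e" by linarith
    qed
    with y show "y \<in> {x' \<in> X. d x x' \<le> r}" by (auto simp: A_def)
  qed (auto simp: A_def intro: add_increasing2)
  ultimately show ?thesis by (simp add: hfun_def A_def)
qed

lemma hfun_less_right:
  assumes "x \<in> X" and "hfun X d mu x r < c"
  obtains e where "e > 0" and "hfun X d mu x (r + e) < c"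
proof -
  obtain n where "hfun X d mu x (r + 1 / Suc n) < c"
    using order_tendstoD(2)[OF LIMSEQ_hfun_right[OF assms(1)] assms(2)]
    by (auto simp: eventually_sequentially)
  then show ?thesis using that[of "1 / Suc n"] by simp
qed

lemma openin_hfun_less: "openin mtopology {x \<in> X. hfun X d mu x r < c}"
proof -
  have "\<exists>e>0. mball x e \<subseteq> {x \<in> X. hfun X d mu x r < c}"
    if x: "x \<in> X" "hfun X d mu x r < c" for x
  proof -
    obtain e where e: "e > 0" "hfun X d mu x (r + e) < c"
      using hfun_less_right[OF x] by blast
    have "hfun X d mu y r < c" if y: "y \<in> mball x e" for y
    proof -
      have "{x' \<in> X. d y x' \<le> r} \<subseteq> {x' \<in> X. d x x' \<le> r + e}"
        using y triangle[of x y] by fastforce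
      then have "hfun X d mu y r \<le> hfun X d mu x (r + e)"
        unfolding hfun_def using x by (intro finite_measure_mono mcball_sets)
      with e show ?thesis by linarith
    qed
    with e show ?thesis by auto
  qed
  then show ?thesis unfolding openin_mtopology by auto
qed

lemma borel_measurable_hfun: "(\<lambda>x. hfun X d mu x r) \<in> borel_measurable mu"
  unfolding borel_measurable_iff_less
  using openin_sets[OF openin_hfun_less] by (simp add: space_eq)

text \<open>Being nondecreasing and right continuous in the radius, \<open>hfun X d mu x t < c\<close> holds
  iff \<open>hfun X d mu x q < c\<close> for some rational \<open>q > t\<close>.\<close>
lemma borel_measurable_hfun_pair:
  "(\<lambda>z. hfun X d mu (fst z) (snd z)) \<in> borel_measurable (mu \<Otimes>\<^sub>M lborel)"
  unfolding borel_measurable_iff_less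
proof
  fix c
  let ?S = "\<Union>q\<in>\<rat>. {x \<in> X. hfun X d mu x q < c} \<times> {..<q}"
  have "{z \<in> space (mu \<Otimes>\<^sub>M lborel). hfun X d mu (fst z) (snd z) < c} = ?S"
  proof (intro equalityI subsetI)
    fix z assume "z \<in> {z \<in> space (mu \<Otimes>\<^sub>M lborel). hfun X d mu (fst z) (snd z) < c}"
    then obtain x t where z: "z = (x, t)" "x \<in> X" "hfun X d mu x t < c"
      by (auto simp: space_pair_measure space_eq)
    then obtain e where e: "e > 0" "hfun X d mu x (t + e) < c"
      using hfun_less_right by blast
    then obtain q where q: "q \<in> \<rat>" "t < q" "q < t + e"
      using Rats_dense_in_real[of t "t + e"] by auto
    with e z have "hfun X d mu x q < c"
      using hfun_mono[of x q "t + e"] by linarith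
    with q z show "z \<in> ?S" by auto
  next
    fix z assume "z \<in> ?S"
    then obtain q x t where z: "z = (x, t)" "x \<in> X" "hfun X d mu x q < c" "t < q"
      by auto
    then have "hfun X d mu x t < c"
      using hfun_mono[of x t q] by linarith
    with z show "z \<in> {z \<in> space (mu \<Otimes>\<^sub>M lborel). hfun X d mu (fst z) (snd z) < c}"
      by (simp add: space_pair_measure space_eq)
  qed
  moreover have "?S \<in> sets (mu \<Otimes>\<^sub>M lborel)"
  proof (rule sets.countable_UN''[OF countable_rat])
    fix q
    show "{x \<in> X. hfun X d mu x q < c} \<times> {..<q} \<in> sets (mu \<Otimes>\<^sub>M lborel)"
      using openin_sets[OF openin_hfun_less] by (intro pair_measureI) auto
  qed
  ultimately show "{z \<in> space (mu \<Otimes>\<^sub>M lborel). hfun X d mu (fst z) (snd z) < c}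
      \<in> sets (mu \<Otimes>\<^sub>M lborel)" by simp
qed

lemma borel_measurable_integral_hfun:
  fixes f :: "real \<Rightarrow> real"
  assumes [measurable]: "f \<in> borel_measurable borel"
  shows "(\<lambda>t. \<integral>x. f (hfun X d mu x t) \<partial>mu) \<in> borel_measurable lborel"
proof (rule borel_measurable_lebesgue_integral[of "\<lambda>t x. f (hfun X d mu x t)"])
  have "(\<lambda>w. (snd w, fst w)) \<in> measurable (lborel \<Otimes>\<^sub>M mu) (mu \<Otimes>\<^sub>M lborel)"
    by (intro measurable_Pair measurable_snd measurable_fst)
  from measurable_compose[OF this borel_measurable_hfun_pair]
  show "(\<lambda>(t, x). f (hfun X d mu x t)) \<in> borel_measurable (lborel \<Otimes>\<^sub>M mu)"
    by (simp add: case_prod_beta')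
qed

lemma integrable_lipschitz_hfun:
  fixes f :: "real \<Rightarrow> real"
  assumes "f \<in> borel_measurable borel" and "L-lipschitz_on {0..1} f"
  shows "integrable mu (\<lambda>x. f (hfun X d mu x t))"
proof (rule integrable_const_bound[where B="\<bar>f 0\<bar> + L"])
  have "\<bar>f u\<bar> \<le> \<bar>f 0\<bar> + L" if "u \<in> {0..1}" for u
  proof -
    have "\<bar>f u - f 0\<bar> \<le> L * u"
      using lipschitz_onD[OF assms(2) that, of 0] that by (simp add: dist_real_def)
    moreover have "L * u \<le> L"
      using that lipschitz_on_nonneg[OF assms(2)] by (simp add: mult_left_le)
    ultimately show ?thesis by linarith
  qed
  then show "AE x in mu. norm (f (hfun X d mu x t)) \<le> \<bar>f 0\<bar> + L"
    using hfun_nonneg hfun_le_1 by simp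
qed (use assms(1) borel_measurable_hfun in measurable)

lemma real_distribution_hfun:
  "real_distribution (distr mu borel (\<lambda>x. hfun X d mu x r))"
  unfolding real_distribution_def real_distribution_axioms_def
  using prob_space_distr[OF borel_measurable_hfun] by simp

end

lemma mm_space_imp_metric_borel_prob: "mm_space X d mu \<Longrightarrow> metric_borel_prob X d mu"
  unfolding mm_space_def metric_borel_prob_def metric_borel_prob_axioms_def by blast

definition ramp :: "int \<Rightarrow> nat \<Rightarrow> real \<Rightarrow> real" where
  "ramp i n s = min 1 (max 0 (real_of_int i + 1 - real (Suc n) * s))"

lemma lipschitz_on_ramp: "(real (Suc n))-lipschitz_on A (ramp i n)"
proof (rule lipschitz_onI)
  fix u v :: real
  have "\<bar>(real_of_int i + 1 - real (Suc n) * u) - (real_of_int i + 1 - real (Suc n) * v)\<bar>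
      = real (Suc n) * \<bar>u - v\<bar>"
    by (simp add: abs_mult right_diff_distrib[symmetric] abs_minus_commute)
  then show "dist (ramp i n u) (ramp i n v) \<le> real (Suc n) * dist u v"
    unfolding ramp_def dist_real_def by linarith
qed simp

lemma abs_ramp_le_1: "\<bar>ramp i n s\<bar> \<le> 1"
  unfolding ramp_def by auto

lemma borel_measurable_ramp[measurable]: "ramp i n \<in> borel_measurable borel"
  unfolding ramp_def[abs_def] by measurable

lemma LIMSEQ_ramp_indicator: "(\<lambda>n. ramp \<lceil>real (Suc n) * a\<rceil> n s) \<longlonglongrightarrow> indicator {..a} s"
proof (cases "s \<le> a")
  case True
  have "ramp \<lceil>real (Suc n) * a\<rceil> n s = 1" for n
  proof -
    have "real (Suc n) * s \<le> real (Suc n) * a" using True by (intro mult_left_mono) auto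
    also have "\<dots> \<le> real_of_int \<lceil>real (Suc n) * a\<rceil>" by linarith
    finally show ?thesis unfolding ramp_def by auto
  qed
  with True show ?thesis by simp
next
  case False
  obtain N :: nat where N: "2 / (s - a) < real N" using reals_Archimedean2 by blast
  have "ramp \<lceil>real (Suc n) * a\<rceil> n s = 0" if "n \<ge> N" for n
  proof -
    have "2 / (s - a) < real (Suc n)" using N that by linarith
    then have "2 < real (Suc n) * (s - a)" using False by (simp add: field_simps)
    moreover have "real_of_int \<lceil>real (Suc n) * a\<rceil> < real (Suc n) * a + 1" by linarith
    ultimately show ?thesis unfolding ramp_def by (simp add: right_diff_distrib)
  qed
  with False have "\<forall>\<^sub>F n in sequentially. ramp \<lceil>real (Suc n) * a\<rceil> n s = indicator {..a} s"
    by (auto simp: eventually_sequentially)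
  then show ?thesis by (rule tendsto_eventually)
qed

lemma (in real_distribution) LIMSEQ_integral_ramp:
  "(\<lambda>n. \<integral>s. ramp \<lceil>real (Suc n) * a\<rceil> n s \<partial>M) \<longlonglongrightarrow> measure M {..a}"
proof -
  have "(\<lambda>n. \<integral>s. ramp \<lceil>real (Suc n) * a\<rceil> n s \<partial>M) \<longlonglongrightarrow> (\<integral>s. indicator {..a} s \<partial>M)"
    by (rule integral_dominated_convergence[where w="\<lambda>_. 1"])
      (use LIMSEQ_ramp_indicator abs_ramp_le_1 in auto)
  then show ?thesis by simp
qed

lemma real_distribution_eqI_ramp:
  assumes "real_distribution M1" "real_distribution M2"
    and "\<And>i n. (\<integral>s. ramp i n s \<partial>M1) = (\<integral>s. ramp i n s \<partial>M2)"
  shows "M1 = M2"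
proof (rule cdf_unique[OF assms(1,2)])
  show "cdf M1 = cdf M2"
  proof
    fix a
    have "(\<lambda>n. \<integral>s. ramp \<lceil>real (Suc n) * a\<rceil> n s \<partial>M1) \<longlonglongrightarrow> measure M2 {..a}"
      using real_distribution.LIMSEQ_integral_ramp[OF assms(2), of a] assms(3) by simp
    with real_distribution.LIMSEQ_integral_ramp[OF assms(1), of a]
    show "cdf M1 a = cdf M2 a" by (simp add: cdf_def LIMSEQ_unique)
  qed
qed

lemma
  assumes "p \<in> couplings muX muY"
  shows prob_space_coupling: "prob_space p"
    and measurable_fst_coupling: "fst \<in> measurable p muX"
    and measurable_snd_coupling: "snd \<in> measurable p muY"
  using assms measurable_cong_sets[of p "muX \<Otimes>\<^sub>M muY"] by (auto simp: couplings_def)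

lemma coupling_integral_diff_le:
  fixes g :: "'a \<Rightarrow> real" and k :: "'b \<Rightarrow> real"
  assumes p: "p \<in> couplings muX muY" and g: "integrable muX g" and k: "integrable muY k"
  shows "\<bar>(\<integral>x. g x \<partial>muX) - (\<integral>y. k y \<partial>muY)\<bar> \<le> (\<integral>z. \<bar>g (fst z) - k (snd z)\<bar> \<partial>p)"
proof -
  have marg: "distr p muX fst = muX" "distr p muY snd = muY"
    using p by (auto simp: couplings_def)
  have [measurable]: "fst \<in> measurable p muX" "snd \<in> measurable p muY"
    "g \<in> borel_measurable muX" "k \<in> borel_measurable muY"
    using measurable_fst_coupling[OF p] measurable_snd_coupling[OF p] g k by auto
  have "integrable p (\<lambda>z. g (fst z))" "integrable p (\<lambda>z. k (snd z))"
    using integrable_distr_eq[of fst p muX g] integrable_distr_eq[of snd p muY k] g k marg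
    by simp_all
  moreover have "(\<integral>x. g x \<partial>muX) = (\<integral>z. g (fst z) \<partial>p)" "(\<integral>y. k y \<partial>muY) = (\<integral>z. k (snd z) \<partial>p)"
    using integral_distr[of fst p muX g] integral_distr[of snd p muY k] marg by simp_all
  ultimately show ?thesis
    using integral_abs_bound[of p "\<lambda>z. g (fst z) - k (snd z)"] by simp
qed

lemma integrable_coupling_abs_hfun_diff:
  assumes mX: "metric_borel_prob X dX muX" and mY: "metric_borel_prob Y dY muY"
    and p: "p \<in> couplings muX muY"
  shows "integrable p (\<lambda>z. \<bar>hfun X dX muX (fst z) t - hfun Y dY muY (snd z) t\<bar>)"
proof -
  interpret X: metric_borel_prob X dX muX by (rule mX)
  interpret Y: metric_borel_prob Y dY muY by (rule mY)
  interpret P: prob_space p by (rule prob_space_coupling[OF p])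
  show ?thesis
  proof (rule P.integrable_const_bound[where B=1])
    have "\<bar>hfun X dX muX x t - hfun Y dY muY y t\<bar> \<le> 1" for x y
      using X.hfun_nonneg[of x t] X.hfun_le_1[of x t] Y.hfun_nonneg[of y t] Y.hfun_le_1[of y t]
      by (simp add: abs_le_iff)
    then show "AE z in p. norm \<bar>hfun X dX muX (fst z) t - hfun Y dY muY (snd z) t\<bar> \<le> 1"
      by simp
    show "(\<lambda>z. \<bar>hfun X dX muX (fst z) t - hfun Y dY muY (snd z) t\<bar>) \<in> borel_measurable p"
      using measurable_compose[OF measurable_fst_coupling[OF p] X.borel_measurable_hfun]
        measurable_compose[OF measurable_snd_coupling[OF p] Y.borel_measurable_hfun]
      by measurable
  qed
qed

lemma abs_integral_lipschitz_hfun_diff_le: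
  fixes f :: "real \<Rightarrow> real"
  assumes mX: "metric_borel_prob X dX muX" and mY: "metric_borel_prob Y dY muY"
    and p: "p \<in> couplings muX muY"
    and f: "f \<in> borel_measurable borel" and lip: "L-lipschitz_on {0..1} f"
  shows "\<bar>(\<integral>x. f (hfun X dX muX x t) \<partial>muX) - (\<integral>y. f (hfun Y dY muY y t) \<partial>muY)\<bar>
    \<le> L * (\<integral>z. \<bar>hfun X dX muX (fst z) t - hfun Y dY muY (snd z) t\<bar> \<partial>p)"
proof -
  interpret X: metric_borel_prob X dX muX by (rule mX)
  interpret Y: metric_borel_prob Y dY muY by (rule mY)
  have "\<bar>(\<integral>x. f (hfun X dX muX x t) \<partial>muX) - (\<integral>y. f (hfun Y dY muY y t) \<partial>muY)\<bar>
      \<le> (\<integral>z. \<bar>f (hfun X dX muX (fst z) t) - f (hfun Y dY muY (snd z) t)\<bar> \<partial>p)"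
    by (rule coupling_integral_diff_le[OF p X.integrable_lipschitz_hfun[OF f lip]
          Y.integrable_lipschitz_hfun[OF f lip]])
  also have "\<dots> \<le> (\<integral>z. L * \<bar>hfun X dX muX (fst z) t - hfun Y dY muY (snd z) t\<bar> \<partial>p)"
    using lipschitz_onD[OF lip] lipschitz_on_nonneg[OF lip] integrable_coupling_abs_hfun_diff[OF mX mY p]
      X.hfun_nonneg X.hfun_le_1 Y.hfun_nonneg Y.hfun_le_1
    by (intro integral_mono') (auto simp: dist_real_def)
  finally show ?thesis by simp
qed

lemma nn_integral_lipschitz_gap_le_cost:
  fixes f :: "real \<Rightarrow> real"
  assumes mX: "metric_borel_prob X dX muX" and mY: "metric_borel_prob Y dY muY"
    and p: "p \<in> couplings muX muY"
    and f: "f \<in> borel_measurable borel" and lip: "L-lipschitz_on {0..1} f" and "L > 0"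
  shows "(\<integral>\<^sup>+ t. indicator {0..} t * ennreal (\<bar>(\<integral>x. f (hfun X dX muX x t) \<partial>muX)
      - (\<integral>y. f (hfun Y dY muY y t) \<partial>muY)\<bar> / L) \<partial>lborel)
    \<le> (\<integral>\<^sup>+ z. cost_h X dX muX Y dY muY (fst z) (snd z) \<partial>p)"
proof -
  interpret P: prob_space p by (rule prob_space_coupling[OF p])
  interpret PL: pair_sigma_finite p lborel by unfold_locales
  define F where "F z t = indicator {0..} t *
    ennreal \<bar>hfun X dX muX (fst z) t - hfun Y dY muY (snd z) t\<bar>" for z t
  have [measurable]: "fst \<in> measurable p muX" "snd \<in> measurable p muY"
    using measurable_fst_coupling[OF p] measurable_snd_coupling[OF p] by auto
  have "(\<lambda>w. (fst (fst w), snd w)) \<in> measurable (p \<Otimes>\<^sub>M lborel) (muX \<Otimes>\<^sub>M lborel)"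
    "(\<lambda>w. (snd (fst w), snd w)) \<in> measurable (p \<Otimes>\<^sub>M lborel) (muY \<Otimes>\<^sub>M lborel)"
    by measurable
  from measurable_compose[OF this(1) metric_borel_prob.borel_measurable_hfun_pair[OF mX]]
    measurable_compose[OF this(2) metric_borel_prob.borel_measurable_hfun_pair[OF mY]]
  have "(\<lambda>w. hfun X dX muX (fst (fst w)) (snd w)) \<in> borel_measurable (p \<Otimes>\<^sub>M lborel)"
    "(\<lambda>w. hfun Y dY muY (snd (fst w)) (snd w)) \<in> borel_measurable (p \<Otimes>\<^sub>M lborel)"
    by simp_all
  then have F_measurable: "case_prod F \<in> borel_measurable (p \<Otimes>\<^sub>M lborel)"
    unfolding F_def case_prod_beta' by measurable
  have "indicator {0..} t * ennreal (\<bar>(\<integral>x. f (hfun X dX muX x t) \<partial>muX)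
      - (\<integral>y. f (hfun Y dY muY y t) \<partial>muY)\<bar> / L) \<le> (\<integral>\<^sup>+ z. F z t \<partial>p)" for t
    using abs_integral_lipschitz_hfun_diff_le[OF mX mY p f lip, of t] \<open>L > 0\<close>
      integrable_coupling_abs_hfun_diff[OF mX mY p, of t]
    by (auto simp: F_def indicator_def nn_integral_eq_integral field_simps intro!: ennreal_leI)
  then have "(\<integral>\<^sup>+ t. indicator {0..} t * ennreal (\<bar>(\<integral>x. f (hfun X dX muX x t) \<partial>muX)
      - (\<integral>y. f (hfun Y dY muY y t) \<partial>muY)\<bar> / L) \<partial>lborel) \<le> (\<integral>\<^sup>+ t. \<integral>\<^sup>+ z. F z t \<partial>p \<partial>lborel)"
    by (intro nn_integral_mono)
  also have "\<dots> = (\<integral>\<^sup>+ z. \<integral>\<^sup>+ t. F z t \<partial>lborel \<partial>p)"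
    by (rule PL.Fubini'[OF F_measurable])
  also have "\<dots> = (\<integral>\<^sup>+ z. cost_h X dX muX Y dY muY (fst z) (snd z) \<partial>p)"
    by (simp add: F_def cost_h_def)
  finally show ?thesis .
qed

lemma AE_integral_hfun_eq_if_L_U_h_eq_0:
  fixes f :: "real \<Rightarrow> real"
  assumes mX: "metric_borel_prob X dX muX" and mY: "metric_borel_prob Y dY muY"
    and L_U_h_0: "L_U_h X dX muX Y dY muY = 0"
    and f: "f \<in> borel_measurable borel" and lip: "L-lipschitz_on {0..1} f"
  shows "AE t in lborel. 0 \<le> t \<longrightarrow>
    (\<integral>x. f (hfun X dX muX x t) \<partial>muX) = (\<integral>y. f (hfun Y dY muY y t) \<partial>muY)"
proof -
  define gap where "gap t = \<bar>(\<integral>x. f (hfun X dX muX x t) \<partial>muX)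
    - (\<integral>y. f (hfun Y dY muY y t) \<partial>muY)\<bar>" for t
  define G where "G t = indicator {0..} t * ennreal (gap t / (L + 1))" for t :: real
  have "(L + 1)-lipschitz_on {0..1} f"
    by (rule lipschitz_on_mono[OF lip]) auto
  then have "(\<integral>\<^sup>+ t. G t \<partial>lborel) \<le> L_U_h X dX muX Y dY muY"
    unfolding L_U_h_def G_def gap_def
    using nn_integral_lipschitz_gap_le_cost[OF mX mY _ f] lipschitz_on_nonneg[OF lip]
    by (intro INF_greatest) simp
  then have "(\<integral>\<^sup>+ t. G t \<partial>lborel) = 0"
    using L_U_h_0 by simp
  moreover have "G \<in> borel_measurable lborel"
    using metric_borel_prob.borel_measurable_integral_hfun[OF mX f]
      metric_borel_prob.borel_measurable_integral_hfun[OF mY f]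
    unfolding G_def gap_def by measurable
  ultimately have "AE t in lborel. G t = 0"
    by (simp add: nn_integral_0_iff_AE)
  then show ?thesis
    by eventually_elim
      (use lipschitz_on_nonneg[OF lip] in \<open>auto simp: G_def gap_def indicator_def\<close>)
qed

theorem lemma6p5:
  fixes X :: "'a set" and dX :: "'a \<Rightarrow> 'a \<Rightarrow> real" and muX :: "'a measure"
    and Y :: "'b set" and dY :: "'b \<Rightarrow> 'b \<Rightarrow> real" and muY :: "'b measure"
  assumes "mm_space X dX muX" and "mm_space Y dY muY"
    and "L_U_h X dX muX Y dY muY = 0"
  shows "AE r in lborel. r > 0 \<longrightarrow>
           distr muX borel (\<lambda>x. hfun X dX muX x r) = distr muY borel (\<lambda>y. hfun Y dY muY y r)"
proof -
  interpret X: metric_borel_prob X dX muX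
    using assms(1) by (rule mm_space_imp_metric_borel_prob)
  interpret Y: metric_borel_prob Y dY muY
    using assms(2) by (rule mm_space_imp_metric_borel_prob)
  have "AE r in lborel. \<forall>i n. 0 \<le> r \<longrightarrow>
      (\<integral>x. ramp i n (hfun X dX muX x r) \<partial>muX) = (\<integral>y. ramp i n (hfun Y dY muY y r) \<partial>muY)"
    unfolding AE_all_countable
    using AE_integral_hfun_eq_if_L_U_h_eq_0[OF X.metric_borel_prob_axioms
        Y.metric_borel_prob_axioms assms(3) borel_measurable_ramp lipschitz_on_ramp]
    by blast
  then show ?thesis
  proof (rule eventually_mono, intro impI)
    fix r :: real
    assume "\<forall>i n. 0 \<le> r \<longrightarrow> (\<integral>x. ramp i n (hfun X dX muX x r) \<partial>muX)
        = (\<integral>y. ramp i n (hfun Y dY muY y r) \<partial>muY)" and "r > 0"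
    then show "distr muX borel (\<lambda>x. hfun X dX muX x r) = distr muY borel (\<lambda>y. hfun Y dY muY y r)"
      by (intro real_distribution_eqI_ramp X.real_distribution_hfun Y.real_distribution_hfun)
        (simp add: integral_distr X.borel_measurable_hfun Y.borel_measurable_hfun)
  qed
qed

end
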